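(* Let $n\in\mathbb N$ and let $K\subset\mathbb R^n$ with $\mathrm{Outrad}(K)\le1$. Then \[ \mathrm{diam}(K^{cc})\le\sqrt{\frac{2n}{n+1}}\,\mathrm{diam}(K). \]
   Context: $B(x,r)$ is the closed Euclidean ball. For $A\subseteq\mathbb R^n$, $A^c=\bigcap_{x\in A}B(x,1)$ and $A^{cc}=(A^c)^c$ (the $c$-hull of $A$). $\mathrm{Outrad}(A)$ is the infimum of $R\ge0$ with $A\subseteq B(z,R)$ for some $z$; $\mathrm{diam}(A)=\sup\{\|x-y\|_2:x,y\in A\}$. *)

theory Defs
  imports "HOL-Analysis.Analysis"
begin

definition cdual :: "'a::euclidean_space set \<Rightarrow> 'a set" where
  "cdual A = (\<Inter>x\<in>A. cball x 1)"

text \<open>Outer radius, valued in extended reals (infinite for unbounded sets).\<close>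
definition outrad :: "'a::euclidean_space set \<Rightarrow> ereal" where
  "outrad A = Inf {ereal R | R. R \<ge> 0 \<and> (\<exists>z. A \<subseteq> cball z R)}"

end

theory Submission
  imports Defs
begin

text \<open>
  Let \<open>B(c, R)\<close> be the smallest closed ball containing \<open>K\<close>; then \<open>R \<le> Outrad(K) \<le> 1\<close>.
  From \<open>K \<subseteq> B(c, R) = B(c, 1 - R)\<^sup>c\<close> we get \<open>B(c, 1 - R) \<subseteq> K\<^sup>c\<close>, hence
  \<open>K\<^sup>c\<^sup>c \<subseteq> B(c, 1 - R)\<^sup>c = B(c, R)\<close> and \<open>diam(K\<^sup>c\<^sup>c) \<le> 2R\<close>. Jung's theorem bounds \<open>2R\<close>:
  by minimality \<open>c\<close> is a convex combination \<open>\<Sum> u\<^sub>i x\<^sub>i\<close> of at most \<open>n + 1\<close> points \<open>x\<^sub>i\<close> of \<open>K\<close> on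
  the sphere \<open>S(c, R)\<close>, and \<open>\<Sum>\<^sub>i u\<^sub>i |x\<^sub>i - x\<^sub>j|\<^sup>2 = 2R\<^sup>2\<close> for every \<open>j\<close>; bounding the left side by
  \<open>(1 - u\<^sub>j) diam(K)\<^sup>2\<close> and summing over \<open>j\<close> gives \<open>R\<^sup>2 \<le> n / (2(n + 1)) diam(K)\<^sup>2\<close>.
\<close>

lemma mem_cdual: "y \<in> cdual A \<longleftrightarrow> (\<forall>x\<in>A. dist x y \<le> 1)"
  by (auto simp: cdual_def)

lemma subset_cdual_iff: "A \<subseteq> cdual B \<longleftrightarrow> B \<subseteq> cdual A"
  unfolding subset_eq mem_cdual by (metis dist_commute)

lemma cdual_antimono: "A \<subseteq> B \<Longrightarrow> cdual B \<subseteq> cdual A"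
  by (auto simp: cdual_def)

lemma unit_vector_direction:
  fixes v :: "'a::{real_normed_vector, perfect_space}"
  obtains e where "norm e = 1" "v = norm v *\<^sub>R e"
proof (cases "v = 0")
  case True
  obtain e :: 'a where "norm e = 1" using vector_choose_size zero_le_one by blast
  with True show ?thesis using that by simp
next
  case False
  then show ?thesis using that[of "sgn v"] by (simp add: norm_sgn sgn_div_norm)
qed

lemma cdual_cball:
  fixes c :: "'a::euclidean_space"
  assumes "0 \<le> r"
  shows "cdual (cball c r) = cball c (1 - r)"
proof
  show "cball c (1 - r) \<subseteq> cdual (cball c r)"
  proof
    fix y assume "y \<in> cball c (1 - r)"
    then have "dist x y \<le> 1" if "dist c x \<le> r" for x
      using that dist_triangle[of x y c] by (simp add: dist_commute)
    then show "y \<in> cdual (cball c r)"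
      by (simp add: mem_cdual)
  qed
next
  show "cdual (cball c r) \<subseteq> cball c (1 - r)"
  proof
    fix y assume y: "y \<in> cdual (cball c r)"
    obtain e where e: "norm e = 1" "y - c = norm (y - c) *\<^sub>R e"
      using unit_vector_direction by blast
    \<comment> \<open>the point of the ball farthest from y\<close>
    define x where "x = c - r *\<^sub>R e"
    have "x \<in> cball c r"
      using assms e(1) by (simp add: x_def dist_norm)
    then have "dist x y \<le> 1"
      using y by (simp add: mem_cdual)
    have "y - x = (norm (y - c) + r) *\<^sub>R e"
      using e(2) by (simp add: x_def algebra_simps)
    then have "dist x y = norm ((norm (y - c) + r) *\<^sub>R e)"
      by (metis dist_norm norm_minus_commute)
    also have "\<dots> = norm (y - c) + r"
      using e(1) assms by simp
    finally show "y \<in> cball c (1 - r)"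
      using \<open>dist x y \<le> 1\<close> by (simp add: dist_norm norm_minus_commute)
  qed
qed

lemma cdual_cdual_subset_cball:
  fixes K :: "'a::euclidean_space set"
  assumes "R \<le> 1" and "K \<subseteq> cball c R"
  shows "cdual (cdual K) \<subseteq> cball c R"
proof -
  have "K \<subseteq> cdual (cball c (1 - R))"
    using assms by (simp add: cdual_cball)
  then have "cball c (1 - R) \<subseteq> cdual K"
    by (simp add: subset_cdual_iff)
  then have "cdual (cdual K) \<subseteq> cdual (cball c (1 - R))"
    by (rule cdual_antimono)
  then show ?thesis
    using assms by (simp add: cdual_cball)
qed

definition min_enclosing_cball :: "'a::metric_space set \<Rightarrow> 'a \<Rightarrow> real \<Rightarrow> bool" where
  "min_enclosing_cball K c R \<longleftrightarrow> K \<subseteq> cball c R \<and> (\<forall>c' R'. K \<subseteq> cball c' R' \<longrightarrow> R \<le> R')"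

lemma compact_subset_ball_imp_cball:
  fixes c :: "'a::metric_space"
  assumes "compact V" and "V \<subseteq> ball c R"
  obtains R' where "R' < R" and "V \<subseteq> cball c R'"
proof (cases "V = {}")
  case True
  then show ?thesis
    using that[of "R - 1"] by simp
next
  case False
  have "continuous_on V (dist c)"
    by (intro continuous_intros)
  then obtain q where "q \<in> V" and "\<forall>p\<in>V. dist c p \<le> dist c q"
    using continuous_attains_sup[OF assms(1) False] by blast
  show ?thesis
  proof (rule that)
    show "dist c q < R"
      using \<open>q \<in> V\<close> assms(2) by auto
    show "V \<subseteq> cball c (dist c q)"
      using \<open>\<forall>p\<in>V. dist c p \<le> dist c q\<close> by auto
  qed
qed

lemma dist_translate_sq:
  fixes c p v :: "'a::real_inner"
  shows "(dist (c + t *\<^sub>R v) p)\<^sup>2 = (dist c p)\<^sup>2 - 2 * t * (v \<bullet> (p - c)) + t\<^sup>2 * (v \<bullet> v)"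
proof -
  have "(dist (c + t *\<^sub>R v) p)\<^sup>2 = ((p - c) - t *\<^sub>R v) \<bullet> ((p - c) - t *\<^sub>R v)"
    by (simp add: dist_norm power2_norm_eq_inner norm_minus_commute algebra_simps)
  also have "\<dots> = (p - c) \<bullet> (p - c) - 2 * t * (v \<bullet> (p - c)) + t\<^sup>2 * (v \<bullet> v)"
    by (simp add: inner_diff_left inner_diff_right inner_commute power2_eq_square algebra_simps)
  also have "(p - c) \<bullet> (p - c) = (dist c p)\<^sup>2"
    by (metis dist_commute dist_norm power2_norm_eq_inner)
  finally show ?thesis .
qed

lemma translate_into_ball:
  fixes c v :: "'a::real_inner"
  assumes "compact K" and "K \<subseteq> cball c R" and "0 < \<delta>"
    and "\<forall>p\<in>K. dist c p = R \<longrightarrow> \<delta> < v \<bullet> (p - c)"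
  obtains c' where "K \<subseteq> ball c' R"
proof -
  define V where "V = K \<inter> {p. v \<bullet> (p - c) \<le> \<delta> / 2}"
  have "compact V"
    unfolding V_def using assms(1) by (intro compact_Int_closed closed_Collect_le continuous_intros)
  moreover have "V \<subseteq> ball c R"
  proof
    fix p assume p: "p \<in> V"
    then have "dist c p \<noteq> R"
      using assms(3,4) by (auto simp: V_def)
    then show "p \<in> ball c R"
      using p assms(2) by (auto simp: V_def)
  qed
  ultimately obtain R' where "R' < R" and R': "V \<subseteq> cball c R'"
    by (rule compact_subset_ball_imp_cball)
  have "((\<lambda>t. t * (v \<bullet> v)) \<longlongrightarrow> 0 * (v \<bullet> v)) (at_right 0)"
    "((\<lambda>t. t * norm v) \<longlongrightarrow> 0 * norm v) (at_right 0)"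
    by (intro tendsto_intros)+
  then have "\<forall>\<^sub>F t in at_right 0. 0 < t \<and> t * (v \<bullet> v) < \<delta> \<and> t * norm v < R - R'"
    using \<open>0 < \<delta>\<close> \<open>R' < R\<close>
    by (intro eventually_conj eventually_at_right_less order_tendstoD(2)) auto
  then obtain t where t: "0 < t" "t * (v \<bullet> v) < \<delta>" "t * norm v < R - R'"
    using eventually_happens'[OF trivial_limit_at_right_real] by blast
  have "dist (c + t *\<^sub>R v) p < R" if "p \<in> K" for p
  proof (cases "p \<in> V")
    case True
    have "dist (c + t *\<^sub>R v) p \<le> dist (c + t *\<^sub>R v) c + dist c p"
      by (rule dist_triangle)
    also have "\<dots> \<le> t * norm v + R'"
      using True R' t(1) by (auto simp: dist_norm)
    finally show ?thesis
      using t(3) by simp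
  next
    case False
    have "dist c p \<le> R"
      using that assms(2) by auto
    then have "(dist c p)\<^sup>2 \<le> R\<^sup>2"
      by (rule power_mono) simp
    have "\<delta> < 2 * (v \<bullet> (p - c))"
      using False that by (simp add: V_def)
    then have "t * (t * (v \<bullet> v)) < t * (2 * (v \<bullet> (p - c)))"
      using t(1,2) by simp
    then have "t\<^sup>2 * (v \<bullet> v) < 2 * t * (v \<bullet> (p - c))"
      by (simp add: power2_eq_square mult_ac)
    with \<open>(dist c p)\<^sup>2 \<le> R\<^sup>2\<close> have "(dist (c + t *\<^sub>R v) p)\<^sup>2 < R\<^sup>2"
      unfolding dist_translate_sq by linarith
    moreover have "0 \<le> R"
      using \<open>dist c p \<le> R\<close> zero_le_dist[of c p] by linarith
    ultimately show ?thesis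
      by (rule power_less_imp_less_base)
  qed
  then show ?thesis
    by (intro that[of "c + t *\<^sub>R v"]) (simp add: subset_eq)
qed

lemma min_enclosing_cball_exists:
  fixes K :: "'a::heine_borel set"
  assumes "compact K" and "K \<noteq> {}"
  obtains c R where "min_enclosing_cball K c R"
proof -
  obtain p0 where p0: "p0 \<in> K"
    using assms(2) by blast
  define D where "D = diameter K"
  have "0 \<le> D" and D: "\<forall>p\<in>K. dist p0 p \<le> D"
    using diameter_ge_0 diameter_bounded_bound p0 compact_imp_bounded[OF assms(1)]
    unfolding D_def by blast+
  \<comment> \<open>since \<open>cball p0 D\<close> encloses \<open>K\<close>, only this compact set of centres and radii matters\<close>
  define A where "A = (cball p0 D \<times> {0..D}) \<inter> {z. K \<subseteq> cball (fst z) (snd z)}"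
  have "{z. K \<subseteq> cball (fst z) (snd z)} = (\<Inter>p\<in>K. {z. dist (fst z) p \<le> snd z})"
    by auto
  then have "compact A"
    unfolding A_def
    by (intro compact_Int_closed compact_Times compact_cball compact_Icc)
      (auto intro!: closed_INT closed_Collect_le continuous_intros)
  moreover have "(p0, D) \<in> A"
    using \<open>0 \<le> D\<close> D by (auto simp: A_def)
  ultimately obtain z where "z \<in> A" and z: "\<forall>y\<in>A. snd z \<le> snd y"
    using continuous_attains_inf[of A snd] by (fastforce intro: continuous_intros)
  have "snd z \<le> R'" if "K \<subseteq> cball c' R'" for c' R'
  proof (cases "R' \<le> D")
    case True
    have "dist c' p0 \<le> R'"
      using that p0 by auto
    moreover have "0 \<le> R'"
      using \<open>dist c' p0 \<le> R'\<close> zero_le_dist[of c' p0] by linarith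
    ultimately have "(c', R') \<in> A"
      using True that by (auto simp: A_def dist_commute)
    then show ?thesis
      using z by force
  next
    case False
    then show ?thesis
      using \<open>z \<in> A\<close> by (auto simp: A_def)
  qed
  then show ?thesis
    using \<open>z \<in> A\<close> by (intro that[of "fst z" "snd z"]) (auto simp: min_enclosing_cball_def A_def)
qed

lemma min_enclosing_cball_closure:
  "min_enclosing_cball (closure K) c R \<longleftrightarrow> min_enclosing_cball K c R"
proof -
  have "closure K \<subseteq> cball c' R' \<longleftrightarrow> K \<subseteq> cball c' R'" for c' R'
    by (meson closed_cball closure_minimal closure_subset order_trans)
  then show ?thesis
    by (simp add: min_enclosing_cball_def)
qed

lemma min_enclosing_cball_centre_in_convex_hull:
  fixes K :: "'a::euclidean_space set"
  assumes "compact K" and min: "min_enclosing_cball K c R"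
  shows "c \<in> convex hull {p\<in>K. dist c p = R}"
proof (rule ccontr)
  let ?S = "{p\<in>K. dist c p = R}"
  assume "c \<notin> convex hull ?S"
  have "?S = K \<inter> sphere c R"
    by auto
  then have "closed (convex hull ?S)"
    using assms(1) by (simp add: compact_Int_closed compact_convex_hull compact_imp_closed)
  then obtain a b where "a \<bullet> c < b" and "\<forall>x\<in>convex hull ?S. b < a \<bullet> x"
    using separating_hyperplane_closed_point[OF convex_convex_hull] \<open>c \<notin> convex hull ?S\<close> by blast
  then have "\<forall>p\<in>K. dist c p = R \<longrightarrow> b - a \<bullet> c < a \<bullet> (p - c)"
    by (auto simp: inner_diff_right intro: hull_inc)
  then obtain c' where "K \<subseteq> ball c' R"
    using translate_into_ball[OF assms(1)] min \<open>a \<bullet> c < b\<close>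
    unfolding min_enclosing_cball_def by (metis diff_gt_0_iff_gt)
  then obtain R' where "R' < R" and "K \<subseteq> cball c' R'"
    using compact_subset_ball_imp_cball[OF assms(1)] by blast
  moreover have "R \<le> R'"
    using min \<open>K \<subseteq> cball c' R'\<close> by (simp add: min_enclosing_cball_def)
  ultimately show False
    by simp
qed

lemma outrad_finite_imp_bounded:
  assumes "outrad K < \<infinity>"
  shows "bounded K"
proof -
  have "{ereal R | R. R \<ge> 0 \<and> (\<exists>z. K \<subseteq> cball z R)} \<noteq> {}" (is "?radii \<noteq> {}")
  proof
    assume "?radii = {}"
    have "outrad K = \<infinity>"
      unfolding outrad_def \<open>?radii = {}\<close> by (simp add: top_ereal_def)
    with assms show False
      by simp
  qed
  then show ?thesis
    using bounded_cball bounded_subset by blast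
qed

lemma min_enclosing_cball_le_outrad:
  assumes "min_enclosing_cball K c R"
  shows "ereal R \<le> outrad K"
  using assms unfolding outrad_def min_enclosing_cball_def by (auto intro: Inf_greatest)

lemma min_enclosing_cball_nonneg:
  assumes "min_enclosing_cball K c R" and "K \<noteq> {}"
  shows "0 \<le> R"
proof -
  obtain x where "x \<in> K"
    using assms(2) by blast
  then have "dist c x \<le> R"
    using assms(1) by (auto simp: min_enclosing_cball_def)
  then show ?thesis
    using zero_le_dist[of c x] by linarith
qed

lemma weighted_sum_dist_sq:
  fixes c y :: "'a::real_inner"
  assumes "sum u T = 1" and "(\<Sum>x\<in>T. u x *\<^sub>R x) = c"
  shows "(\<Sum>x\<in>T. u x * (dist x y)\<^sup>2) = (\<Sum>x\<in>T. u x * (dist x c)\<^sup>2) + (dist c y)\<^sup>2"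
proof -
  have centred: "(\<Sum>x\<in>T. u x *\<^sub>R (x - c)) = 0"
    using assms by (simp add: scaleR_diff_right sum_subtractf flip: scaleR_sum_left)
  have "u x * (dist x y)\<^sup>2
      = u x * (dist x c)\<^sup>2 + 2 * ((u x *\<^sub>R (x - c)) \<bullet> (c - y)) + u x * (dist c y)\<^sup>2" for x
  proof -
    have "(dist x y)\<^sup>2 = (dist x c)\<^sup>2 + 2 * ((x - c) \<bullet> (c - y)) + (dist c y)\<^sup>2"
      using dot_norm[of "x - c" "c - y"] by (simp add: dist_norm)
    then show ?thesis
      by (simp add: distrib_left mult.left_commute)
  qed
  then have "(\<Sum>x\<in>T. u x * (dist x y)\<^sup>2)
      = (\<Sum>x\<in>T. u x * (dist x c)\<^sup>2 + 2 * ((u x *\<^sub>R (x - c)) \<bullet> (c - y)) + u x * (dist c y)\<^sup>2)"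
    by simp
  also have "\<dots> = (\<Sum>x\<in>T. u x * (dist x c)\<^sup>2) + 2 * ((\<Sum>x\<in>T. u x *\<^sub>R (x - c)) \<bullet> (c - y))
        + sum u T * (dist c y)\<^sup>2"
    by (simp add: sum.distrib inner_sum_left sum_distrib_left sum_distrib_right)
  finally show ?thesis
    using centred assms(1) by simp
qed

lemma jung_inequality_finite:
  fixes T :: "'a::real_inner set"
  assumes "finite T" and "\<forall>x\<in>T. 0 \<le> u x" and "sum u T = 1" and "(\<Sum>x\<in>T. u x *\<^sub>R x) = c"
    and "\<forall>x\<in>T. dist x c = R" and "\<forall>x\<in>T. \<forall>y\<in>T. dist x y \<le> d"
  shows "2 * real (card T) * R\<^sup>2 \<le> (real (card T) - 1) * d\<^sup>2"
proof -
  have "2 * R\<^sup>2 \<le> (1 - u y) * d\<^sup>2" if y: "y \<in> T" for y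
  proof -
    have "2 * R\<^sup>2 = (\<Sum>x\<in>T. u x * (dist x y)\<^sup>2)"
      using weighted_sum_dist_sq[OF assms(3,4), of y] assms(3,5) y dist_commute[of c y]
      by (simp flip: sum_distrib_right)
    also have "\<dots> = (\<Sum>x\<in>T - {y}. u x * (dist x y)\<^sup>2)"
      using sum.remove[OF assms(1) y, of "\<lambda>x. u x * (dist x y)\<^sup>2"] by simp
    also have "\<dots> \<le> (\<Sum>x\<in>T - {y}. u x * d\<^sup>2)"
      using assms(2,6) y
      by (intro sum_mono mult_left_mono power_mono) auto
    also have "\<dots> = (1 - u y) * d\<^sup>2"
    proof -
      have "sum u (T - {y}) = 1 - u y"
        using sum.remove[OF assms(1) y, of u] assms(3) by simp
      then show ?thesis
        by (simp flip: sum_distrib_right)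
    qed
    finally show ?thesis .
  qed
  then have "(\<Sum>y\<in>T. 2 * R\<^sup>2) \<le> (\<Sum>y\<in>T. (1 - u y) * d\<^sup>2)"
    by (rule sum_mono)
  then show ?thesis
    using assms(3) by (simp add: sum_subtractf left_diff_distrib flip: sum_distrib_right)
qed

lemma jung_radius_bound:
  fixes S :: "'a::euclidean_space set"
  assumes "c \<in> convex hull S" and "bounded S" and "\<forall>x\<in>S. dist x c = R"
  shows "R\<^sup>2 \<le> real DIM('a) / (2 * (real DIM('a) + 1)) * (diameter S)\<^sup>2"
proof -
  define n where "n = real DIM('a)"
  obtain T where T: "finite T" "T \<subseteq> S" "card T \<le> DIM('a) + 1" "c \<in> convex hull T"
    using assms(1) caratheodory[of S] by blast
  obtain u where u: "\<forall>x\<in>T. 0 \<le> u x" "sum u T = 1" "(\<Sum>x\<in>T. u x *\<^sub>R x) = c"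
    using T(4) convex_hull_finite[OF T(1)] by blast
  define m where "m = real (card T)"
  have "T \<noteq> {}"
    using u(2) by auto
  then have m: "1 \<le> m" "m \<le> n + 1"
    using T(1,3) by (auto simp: m_def n_def Suc_le_eq card_gt_0_iff)
  have "\<forall>x\<in>T. \<forall>y\<in>T. dist x y \<le> diameter S"
    using T(2) diameter_bounded_bound[OF assms(2)] by blast
  then have "2 * m * R\<^sup>2 \<le> (m - 1) * (diameter S)\<^sup>2"
    unfolding m_def using jung_inequality_finite[OF T(1) u] assms(3) T(2) by blast
  then have "R\<^sup>2 \<le> (m - 1) / (2 * m) * (diameter S)\<^sup>2"
    using m by (simp add: field_simps)
  also have "\<dots> \<le> n / (2 * (n + 1)) * (diameter S)\<^sup>2"
    using m by (intro mult_right_mono) (simp_all add: field_simps)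
  finally show ?thesis
    unfolding n_def .
qed

lemma jung_theorem:
  fixes K :: "'a::euclidean_space set"
  assumes "compact K" and "min_enclosing_cball K c R"
  shows "2 * R \<le> sqrt (2 * real DIM('a) / (real DIM('a) + 1)) * diameter K"
proof -
  define n where "n = real DIM('a)"
  define S where "S = {p\<in>K. dist c p = R}"
  have "bounded K"
    using assms(1) by (rule compact_imp_bounded)
  moreover have "S \<subseteq> K"
    by (auto simp: S_def)
  ultimately have "bounded S" and "diameter S \<le> diameter K"
    by (auto intro: bounded_subset diameter_subset)
  have "R\<^sup>2 \<le> n / (2 * (n + 1)) * (diameter S)\<^sup>2"
    unfolding n_def S_def
    using min_enclosing_cball_centre_in_convex_hull[OF assms] \<open>bounded S\<close>
    by (intro jung_radius_bound) (auto simp: S_def dist_commute)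
  also have "\<dots> \<le> n / (2 * (n + 1)) * (diameter K)\<^sup>2"
    using \<open>diameter S \<le> diameter K\<close> diameter_ge_0[OF \<open>bounded S\<close>]
    by (intro mult_left_mono power_mono) (auto simp: n_def)
  finally have "(2 * R)\<^sup>2 \<le> 2 * n / (n + 1) * (diameter K)\<^sup>2"
    by (simp add: n_def field_simps power_mult_distrib)
  then have "2 * R \<le> sqrt (2 * n / (n + 1) * (diameter K)\<^sup>2)"
    by (rule real_le_rsqrt)
  also have "\<dots> = sqrt (2 * n / (n + 1)) * diameter K"
    unfolding real_sqrt_mult real_sqrt_abs using diameter_ge_0[OF \<open>bounded K\<close>] by simp
  finally show ?thesis
    unfolding n_def .
qed

theorem theorem3p7:
  fixes K :: "'a::euclidean_space set"
  assumes "outrad K \<le> 1"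
  shows "diameter (cdual (cdual K))
           \<le> sqrt (2 * real DIM('a) / (real DIM('a) + 1)) * diameter K"
proof (cases "K = {}")
  case True
  then have "cdual (cdual K) \<subseteq> cball 0 (-1)"
    by (intro cdual_cdual_subset_cball) auto
  then show ?thesis
    using True by simp
next
  case False
  have "bounded K"
    using assms by (intro outrad_finite_imp_bounded) (auto simp: order_le_less_trans)
  then have "compact (closure K)"
    by (simp add: compact_closure)
  then obtain c R where min: "min_enclosing_cball (closure K) c R"
    using min_enclosing_cball_exists False by blast
  then have minK: "min_enclosing_cball K c R"
    by (simp add: min_enclosing_cball_closure)
  have "ereal R \<le> 1"
    using min_enclosing_cball_le_outrad[OF minK] assms by (rule order_trans)
  then have "cdual (cdual K) \<subseteq> cball c R"
    using minK by (intro cdual_cdual_subset_cball) (auto simp: min_enclosing_cball_def one_ereal_def)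
  then have "diameter (cdual (cdual K)) \<le> 2 * R"
    using diameter_subset[of _ "cball c R"] min_enclosing_cball_nonneg[OF minK False] by simp
  also have "\<dots> \<le> sqrt (2 * real DIM('a) / (real DIM('a) + 1)) * diameter (closure K)"
    using \<open>compact (closure K)\<close> min by (rule jung_theorem)
  finally show ?thesis
    using diameter_closure[OF \<open>bounded K\<close>] by simp
qed

end
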